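(* Let $H$ be a real separable Hilbert space, $k\ge1$, $X$ a measurable space, $\mu_1,\mu_2$ $\sigma$-finite measures on $X$, and $T_1,T_2:X\to\mathcal G_k(H)$ measurable maps. If for every $V\in\mathcal G_k(H)$ and every measurable $A\subset X$ $$\int_A\det\big(\pi_V|_{T_1(x)}\big)\,d\mu_1(x)=\int_A\det\big(\pi_V|_{T_2(x)}\big)\,d\mu_2(x),$$ then $\mu_1=\mu_2$ and $\mu_1(\{x:T_1(x)\ne T_2(x)\})=0$. In particular, if $R\subset H$ is $k$-pseudorectifiable and $(\mu_1,T_1)$, $(\mu_2,T_2)$ are two pairs satisfying the defining identity of pseudorectifiability for $R$, then $\mu_1=\mu_2$ and $T_1=T_2$ $\mu_1$-a.e.
   Context: $\mathcal G_k(H)$ is the set of $k$-dimensional linear subspaces of $H$, metrized by the norm distance between orthogonal projections; $\pi_V$ is orthogonal projection onto $V$; for linear $L$ on a $k$-dimensional subspace $W$, $\det(L|_W)=\sqrt{\det(L^*L)}$ is the metric determinant. A set $R$ with $\mathcal H^k|_R$ $\sigma$-finite is $k$-pseudorectifiable if there exist a measurable $T_R:R\to\mathcal G_k(H)$ and a $\sigma$-finite measure $\mu_R$ mutually absolutely continuous with $\mathcal H^k|_R$ such that for all $V\in\mathcal G_k(H)$ and Borel $A\subset R$: $\int\#(\pi_V^{-1}(y)\cap A)\,d\mathcal H^k(y)=\int_A\det(\pi_V|_{T_R(x)})\,d\mu_R(x)$ (the defining identity). *)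

theory Defs
  imports "HOL-Analysis.Analysis"
begin

definition grass :: "nat \<Rightarrow> ('a::real_inner) set set" where
  "grass k = {V. subspace V \<and> dim V = k}"

definition proj :: "('a::real_inner) set \<Rightarrow> 'a \<Rightarrow> 'a" where
  "proj V x = (THE y. y \<in> V \<and> (\<forall>v\<in>V. inner (x - y) v = 0))"

definition gdist :: "('a::real_inner) set \<Rightarrow> 'a set \<Rightarrow> real" where
  "gdist V W = onorm (\<lambda>x. proj V x - proj W x)"

definition grass_open :: "nat \<Rightarrow> ('a::real_inner) set set \<Rightarrow> bool" where
  "grass_open k U \<longleftrightarrow> U \<subseteq> grass k \<and>
     (\<forall>V\<in>U. \<exists>e>0. \<forall>W\<in>grass k. gdist V W < e \<longrightarrow> W \<in> U)"

definition grass_measure :: "nat \<Rightarrow> ('a::real_inner) set measure" where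
  "grass_measure k = sigma (grass k) {U. grass_open k U}"

definition onb :: "('a::real_inner) set \<Rightarrow> nat \<Rightarrow> (nat \<Rightarrow> 'a) \<Rightarrow> bool" where
  "onb W k b \<longleftrightarrow> (\<forall>i<k. b i \<in> W) \<and>
     (\<forall>i<k. \<forall>j<k. inner (b i) (b j) = (if i = j then 1 else 0)) \<and>
     span (b ` {..<k}) = W"

definition leib_det :: "nat \<Rightarrow> (nat \<Rightarrow> nat \<Rightarrow> real) \<Rightarrow> real" where
  "leib_det k M = (\<Sum>p | p permutes {..<k}. of_int (sign p) * (\<Prod>i<k. M i (p i)))"

text \<open>det(L|_W) = sqrt(det(L^* L)); the matrix of L^* L in an orthonormal basis b of W
  has entries inner (L (b i)) (L (b j)).\<close>
definition mdet :: "('a::real_inner \<Rightarrow> 'a) \<Rightarrow> 'a set \<Rightarrow> real" where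
  "mdet L W = (let k = dim W; b = (SOME b. onb W k b)
               in sqrt (leib_det k (\<lambda>i j. inner (L (b i)) (L (b j)))))"

definition omega :: "nat \<Rightarrow> real" where
  "omega k = pi powr (real k / 2) / Gamma (real k / 2 + 1)"

definition hausdorff_delta :: "nat \<Rightarrow> real \<Rightarrow> ('a::metric_space) set \<Rightarrow> ennreal" where
  "hausdorff_delta k \<delta> A = (INF C \<in> {C :: nat \<Rightarrow> 'a set. A \<subseteq> (\<Union>i. C i) \<and>
       (\<forall>i. bounded (C i) \<and> diameter (C i) \<le> \<delta>)}.
       (\<Sum>i. ennreal (omega k * (diameter (C i) / 2) ^ k)))"

definition hausdorff_outer :: "nat \<Rightarrow> ('a::metric_space) set \<Rightarrow> ennreal" where
  "hausdorff_outer k A = (SUP \<delta> \<in> {0<..}. hausdorff_delta k \<delta> A)"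

definition hausdorff_measure :: "nat \<Rightarrow> ('a::metric_space) measure" where
  "hausdorff_measure k = measure_of UNIV (sets borel) (hausdorff_outer k)"

definition hausdorff_restr :: "nat \<Rightarrow> ('a::metric_space) set \<Rightarrow> 'a measure" where
  "hausdorff_restr k R = measure_of R (sets (restrict_space borel R)) (hausdorff_outer k)"

definition ecard :: "'a set \<Rightarrow> ennreal" where
  "ecard S = (if finite S then of_nat (card S) else \<infinity>)"

definition pseudorect_pair ::
  "nat \<Rightarrow> ('a::{real_inner,complete_space,second_countable_topology}) set
     \<Rightarrow> 'a measure \<Rightarrow> ('a \<Rightarrow> 'a set) \<Rightarrow> bool" where
  "pseudorect_pair k R mu T \<longleftrightarrow>
     sigma_finite_measure (hausdorff_restr k R) \<and>
     space mu = R \<and> sets mu = sets (restrict_space borel R) \<and>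
     sigma_finite_measure mu \<and>
     absolutely_continuous mu (hausdorff_restr k R) \<and>
     absolutely_continuous (hausdorff_restr k R) mu \<and>
     T \<in> mu \<rightarrow>\<^sub>M grass_measure k \<and>
     (\<forall>V\<in>grass k. \<forall>A\<in>sets mu.
        (\<integral>\<^sup>+y. ecard (proj V -` {y} \<inter> A) \<partial>hausdorff_measure k)
        = (\<integral>\<^sup>+x\<in>A. ennreal (mdet (proj V) (T x)) \<partial>mu))"

definition pseudorectifiable :: "nat \<Rightarrow> ('a::{real_inner,complete_space,second_countable_topology}) set \<Rightarrow> bool" where
  "pseudorectifiable k R \<longleftrightarrow> (\<exists>mu T. pseudorect_pair k R mu T)"

end

theory Submission
  imports Defs "Jordan_Normal_Form.Determinant"
begin

text \<open>
  Both measures have densities \<open>g\<^sub>1, g\<^sub>2\<close> with respect to \<open>\<mu>\<^sub>1 + \<mu>\<^sub>2\<close>, and the hypothesis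
  says that \<open>g\<^sub>1(x) F(V, T\<^sub>1 x) = g\<^sub>2(x) F(V, T\<^sub>2 x)\<close> almost everywhere, for each \<open>V\<close>, where
  \<open>F(V, W) = det(\<pi>\<^sub>V|\<^sub>W)\<close>. Letting \<open>V\<close> run through a countable dense family of subspaces
  gives this identity for all \<open>V\<close> at once, at almost every \<open>x\<close>.
  Now \<open>F\<close> is symmetric, \<open>F(V, V) = 1\<close>, and by Hadamard's inequality \<open>F(V, W) = 1\<close> only for
  \<open>V = W\<close>. Taking \<open>V = T\<^sub>1 x\<close> and \<open>V = T\<^sub>2 x\<close> yields \<open>g\<^sub>1 = g\<^sub>2 f\<close> and \<open>g\<^sub>1 f = g\<^sub>2\<close> with
  \<open>f = F(T\<^sub>1 x, T\<^sub>2 x) \<ge> 0\<close>, hence \<open>g\<^sub>1 = g\<^sub>2\<close>, and \<open>f = 1\<close>, i.e. \<open>T\<^sub>1 x = T\<^sub>2 x\<close>, wherever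
  \<open>g\<^sub>1 \<noteq> 0\<close>.
\<close>

lemma span_image_lessThanE:
  fixes u :: "nat \<Rightarrow> 'a::real_vector"
  assumes "x \<in> span (u ` {..<n})"
  obtains \<beta> where "x = (\<Sum>i<n. \<beta> i *\<^sub>R u i)"
proof -
  have "\<exists>\<beta>. x = (\<Sum>i<n. \<beta> i *\<^sub>R u i)"
  proof (rule span_induct_alt[OF assms])
    show "\<exists>\<beta>. 0 = (\<Sum>i<n. \<beta> i *\<^sub>R u i)" by (rule exI[of _ "\<lambda>_. 0"]) simp
  next
    fix c x y assume "x \<in> u ` {..<n}" and "\<exists>\<beta>. y = (\<Sum>i<n. \<beta> i *\<^sub>R u i)"
    then obtain j \<beta> where j: "j < n" "x = u j" and y: "y = (\<Sum>i<n. \<beta> i *\<^sub>R u i)" by auto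
    have "(\<Sum>i<n. (\<beta> i + (if i = j then c else 0)) *\<^sub>R u i)
        = y + (\<Sum>i<n. (if i = j then c else 0) *\<^sub>R u i)"
      by (simp add: y scaleR_add_left sum.distrib)
    also have "(\<Sum>i<n. (if i = j then c else 0) *\<^sub>R u i) = c *\<^sub>R x"
      using j by (simp add: if_distrib[of "\<lambda>t. t *\<^sub>R _"] cong: if_cong)
    finally show "\<exists>\<beta>. c *\<^sub>R x + y = (\<Sum>i<n. \<beta> i *\<^sub>R u i)" by (metis add.commute)
  qed
  then show thesis using that by blast
qed

lemma sum_in_span_image_lessThan:
  fixes u :: "nat \<Rightarrow> 'a::real_vector"
  shows "(\<Sum>i<n. \<beta> i *\<^sub>R u i) \<in> span (u ` {..<n})"
  by (intro span_sum span_scale span_base) auto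

lemma span_image_lessThan_mono:
  fixes u :: "nat \<Rightarrow> 'a::real_vector"
  shows "m \<le> n \<Longrightarrow> span (u ` {..<m}) \<subseteq> span (u ` {..<n})"
  by (intro span_mono image_mono) auto

definition lin_indep_seq :: "nat \<Rightarrow> (nat \<Rightarrow> 'a::real_vector) \<Rightarrow> bool" where
  "lin_indep_seq n u \<longleftrightarrow> (\<forall>\<alpha>. (\<Sum>i<n. \<alpha> i *\<^sub>R u i) = 0 \<longrightarrow> (\<forall>i<n. \<alpha> i = 0))"

lemma lin_indep_seq_iff:
  fixes u :: "nat \<Rightarrow> 'a::real_vector"
  shows "lin_indep_seq n u \<longleftrightarrow> inj_on u {..<n} \<and> independent (u ` {..<n})"
proof
  assume indep: "lin_indep_seq n u"
  show "inj_on u {..<n} \<and> independent (u ` {..<n})"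
  proof
    show inj: "inj_on u {..<n}"
    proof (rule inj_onI, rule ccontr)
      fix i j assume ij: "i \<in> {..<n}" "j \<in> {..<n}" "u i = u j" "i \<noteq> j"
      define \<alpha> where "\<alpha> l = (if l = i then 1 else if l = j then -1 else (0::real))" for l
      have "(\<Sum>l<n. \<alpha> l *\<^sub>R u l) = (\<Sum>l\<in>{i,j}. \<alpha> l *\<^sub>R u l)"
        using ij by (intro sum.mono_neutral_right) (auto simp: \<alpha>_def)
      also have "\<dots> = 0" using ij by (simp add: \<alpha>_def)
      finally have "\<alpha> i = 0" using indep ij unfolding lin_indep_seq_def by blast
      then show False by (simp add: \<alpha>_def)
    qed
    show "independent (u ` {..<n})"
    proof (rule independent_if_scalars_zero)
      fix f x assume s: "(\<Sum>x\<in>u ` {..<n}. f x *\<^sub>R x) = 0" and "x \<in> u ` {..<n}"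
      then obtain i where "i < n" "x = u i" by auto
      moreover have "(\<Sum>i<n. f (u i) *\<^sub>R u i) = 0" using s inj by (simp add: sum.reindex)
      ultimately show "f x = 0"
        using indep[unfolded lin_indep_seq_def, rule_format, of "\<lambda>i. f (u i)"] by auto
    qed simp
  qed
next
  assume "inj_on u {..<n} \<and> independent (u ` {..<n})"
  then have inj: "inj_on u {..<n}" and indep: "independent (u ` {..<n})" by auto
  show "lin_indep_seq n u"
    unfolding lin_indep_seq_def
  proof (intro allI impI)
    fix \<alpha> i assume s: "(\<Sum>i<n. \<alpha> i *\<^sub>R u i) = 0" and i: "i < n"
    define f where "f v = \<alpha> (the_inv_into {..<n} u v)" for v
    have "(\<Sum>v\<in>u ` {..<n}. f v *\<^sub>R v) = (\<Sum>i<n. \<alpha> i *\<^sub>R u i)"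
      using inj by (simp add: sum.reindex f_def the_inv_into_f_f)
    then have "f (u i) = 0" using s i indep by (intro independentD[of "u ` {..<n}"]) auto
    then show "\<alpha> i = 0" using inj i by (simp add: f_def the_inv_into_f_f)
  qed
qed

lemma lin_indep_seq_not_in_span:
  fixes u :: "nat \<Rightarrow> 'a::real_vector"
  assumes "lin_indep_seq n u" "m < n"
  shows "u m \<notin> span (u ` {..<m})"
proof
  assume "u m \<in> span (u ` {..<m})"
  then obtain \<beta> where \<beta>: "u m = (\<Sum>i<m. \<beta> i *\<^sub>R u i)" by (rule span_image_lessThanE)
  define \<alpha> where "\<alpha> i = (if i < m then \<beta> i else if i = m then -1 else 0)" for i
  have "(\<Sum>i<n. \<alpha> i *\<^sub>R u i) = (\<Sum>i<Suc m. \<alpha> i *\<^sub>R u i)"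
    using assms(2) by (intro sum.mono_neutral_right) (auto simp: \<alpha>_def)
  also have "\<dots> = (\<Sum>i<m. \<beta> i *\<^sub>R u i) - u m" by (simp add: \<alpha>_def)
  also have "\<dots> = 0" using \<beta> by simp
  finally have "\<alpha> m = 0" using assms unfolding lin_indep_seq_def by blast
  then show False by (simp add: \<alpha>_def)
qed

definition orthonormal_seq :: "nat \<Rightarrow> (nat \<Rightarrow> 'a::real_inner) \<Rightarrow> bool" where
  "orthonormal_seq n e \<longleftrightarrow> (\<forall>i<n. \<forall>j<n. inner (e i) (e j) = (if i = j then 1 else 0))"

lemma onb_imp_orthonormal_seq: "onb W k b \<Longrightarrow> orthonormal_seq k b"
  unfolding onb_def orthonormal_seq_def by auto

lemma orthonormal_seq_norm: "orthonormal_seq n e \<Longrightarrow> i < n \<Longrightarrow> norm (e i) = 1"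
  unfolding orthonormal_seq_def by (simp add: norm_eq_sqrt_inner)

lemma inner_sum_orthonormal_seq:
  fixes e :: "nat \<Rightarrow> 'a::real_inner"
  assumes "orthonormal_seq n e" "l < n"
  shows "inner (\<Sum>j<n. \<beta> j *\<^sub>R e j) (e l) = \<beta> l"
proof -
  have "inner (\<Sum>j<n. \<beta> j *\<^sub>R e j) (e l) = (\<Sum>j<n. \<beta> j * inner (e j) (e l))"
    by (simp add: inner_sum_left)
  also have "\<dots> = (\<Sum>j<n. if j = l then \<beta> l else 0)"
    using assms unfolding orthonormal_seq_def by (intro sum.cong) auto
  finally show ?thesis using assms(2) by simp
qed

lemma orthonormal_seq_expansion:
  fixes e :: "nat \<Rightarrow> 'a::real_inner"
  assumes "orthonormal_seq n e" "x \<in> span (e ` {..<n})"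
  shows "x = (\<Sum>j<n. inner x (e j) *\<^sub>R e j)"
proof -
  obtain \<beta> where \<beta>: "x = (\<Sum>i<n. \<beta> i *\<^sub>R e i)" using assms(2) by (rule span_image_lessThanE)
  have "(\<Sum>j<n. inner x (e j) *\<^sub>R e j) = (\<Sum>j<n. \<beta> j *\<^sub>R e j)"
    by (intro sum.cong refl) (simp add: \<beta> inner_sum_orthonormal_seq[OF assms(1)])
  then show ?thesis using \<beta> by simp
qed

lemma gram_schmidt_step:
  fixes u e :: "nat \<Rightarrow> 'a::real_inner"
  assumes indep: "lin_indep_seq n u" "m < n" and e: "orthonormal_seq m e"
    and tri: "\<forall>i<m. u i \<in> span (e ` {..<Suc i}) \<and> e i \<in> span (u ` {..<Suc i})"
  obtains e' where "orthonormal_seq (Suc m) e'"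
    and "\<forall>i<Suc m. u i \<in> span (e' ` {..<Suc i}) \<and> e' i \<in> span (u ` {..<Suc i})"
proof -
  define r where "r = u m - (\<Sum>l<m. inner (u m) (e l) *\<^sub>R e l)"
  define e' where "e' = e(m := r /\<^sub>R norm r)"
  have e_u: "e l \<in> span (u ` {..<Suc m})" if "l < m" for l
    using tri that span_image_lessThan_mono[of "Suc l" "Suc m" u] by auto
  have "r \<noteq> 0"
  proof
    assume "r = 0"
    then have "u m = (\<Sum>l<m. inner (u m) (e l) *\<^sub>R e l)" unfolding r_def by simp
    also have "\<dots> \<in> span (u ` {..<m})"
      using tri span_image_lessThan_mono[of "Suc _" m u]
      by (intro span_sum span_scale) (auto simp: Suc_le_eq)
    finally show False using lin_indep_seq_not_in_span[OF indep] by simp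
  qed
  have r_orth: "inner r (e l) = 0" if "l < m" for l
    using that by (simp add: r_def inner_diff_left inner_sum_orthonormal_seq[OF e])
  have "orthonormal_seq (Suc m) e'"
    unfolding orthonormal_seq_def
  proof (intro allI impI)
    fix i j assume ij: "i < Suc m" "j < Suc m"
    show "inner (e' i) (e' j) = (if i = j then 1 else 0)"
      using \<open>r \<noteq> 0\<close> r_orth[of i] r_orth[of j] e ij
      by (cases "i = m"; cases "j = m")
         (auto simp: e'_def dot_square_norm power2_eq_square orthonormal_seq_def inner_commute)
  qed
  moreover have "u m \<in> span (e' ` {..<Suc m})"
  proof -
    have "u m = norm r *\<^sub>R e' m + (\<Sum>l<m. inner (u m) (e' l) *\<^sub>R e' l)"
      using \<open>r \<noteq> 0\<close> by (simp add: e'_def r_def)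
    also have "\<dots> \<in> span (e' ` {..<Suc m})"
      by (intro span_add span_scale span_sum span_base) auto
    finally show ?thesis .
  qed
  moreover have "e' m \<in> span (u ` {..<Suc m})"
  proof -
    have "r \<in> span (u ` {..<Suc m})"
      unfolding r_def using e_u by (intro span_diff span_sum span_scale) (auto intro: span_base)
    then show ?thesis by (simp add: e'_def span_scale)
  qed
  moreover have "e' ` {..<Suc i} = e ` {..<Suc i}" if "i < m" for i
    using that by (auto simp: e'_def)
  ultimately show thesis
    using tri that[of e'] by (auto simp: less_Suc_eq e'_def)
qed

lemma gram_schmidt_seq:
  fixes u :: "nat \<Rightarrow> 'a::real_inner"
  assumes indep: "lin_indep_seq n u"
  obtains e where "orthonormal_seq n e"
    and "\<And>i. i < n \<Longrightarrow> u i \<in> span (e ` {..<Suc i})"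
    and "span (e ` {..<n}) = span (u ` {..<n})"
proof -
  have "\<exists>e. orthonormal_seq m e \<and>
     (\<forall>i<m. u i \<in> span (e ` {..<Suc i}) \<and> e i \<in> span (u ` {..<Suc i}))" if "m \<le> n" for m
    using that
  proof (induction m)
    case 0
    show ?case by (auto simp: orthonormal_seq_def)
  next
    case (Suc m)
    then obtain e where "orthonormal_seq m e"
      and "\<forall>i<m. u i \<in> span (e ` {..<Suc i}) \<and> e i \<in> span (u ` {..<Suc i})"
      by auto
    with indep Suc.prems show ?case by (elim gram_schmidt_step) auto
  qed
  then obtain e where e: "orthonormal_seq n e"
    and tri: "\<forall>i<n. u i \<in> span (e ` {..<Suc i}) \<and> e i \<in> span (u ` {..<Suc i})"
    by blast
  have "span (e ` {..<n}) = span (u ` {..<n})"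
  proof
    show "span (e ` {..<n}) \<subseteq> span (u ` {..<n})"
      using tri span_image_lessThan_mono[of "Suc _" n u] by (intro span_minimal) (auto simp: Suc_le_eq)
    show "span (u ` {..<n}) \<subseteq> span (e ` {..<n})"
      using tri span_image_lessThan_mono[of "Suc _" n e] by (intro span_minimal) (auto simp: Suc_le_eq)
  qed
  with e tri that show thesis by blast
qed

section \<open>Orthonormal bases and orthogonal projections\<close>

text \<open>\<open>dim\<close> is the cardinality of a basis, hence \<open>0\<close> for an infinite-dimensional subspace: this is
  why \<open>k \<ge> 1\<close> is needed to make the elements of \<open>grass k\<close> finite-dimensional.\<close>
lemma grass_onb_exists:
  assumes "V \<in> grass k" "k \<ge> 1"
  shows "\<exists>b. onb V k b"
proof -
  from assms have V: "subspace V" "dim V = k" unfolding grass_def by auto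
  obtain B where B: "B \<subseteq> V" "independent B" "V \<subseteq> span B" "card B = k"
    using basis_exists V(2) by blast
  have "finite B" using B(4) assms(2) card.infinite by fastforce
  then obtain h where h: "bij_betw h {0..<k} B" using ex_bij_betw_nat_finite B(4) by blast
  then have "h ` {..<k} = B" "inj_on h {..<k}"
    unfolding bij_betw_def by (simp_all add: lessThan_atLeast0)
  then have "lin_indep_seq k h" using B(2) by (simp add: lin_indep_seq_iff)
  then obtain e where e: "orthonormal_seq k e" "span (e ` {..<k}) = span (h ` {..<k})"
    by (rule gram_schmidt_seq)
  have "span (e ` {..<k}) = V"
    using e(2) \<open>h ` {..<k} = B\<close> B span_subspace[OF B(1) B(3) V(1)] by simp
  then have "onb V k e"
    using e(1) unfolding onb_def orthonormal_seq_def by (auto intro: span_base)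
  then show ?thesis by blast
qed

definition grass_onb :: "nat \<Rightarrow> 'a::real_inner set \<Rightarrow> nat \<Rightarrow> 'a" where
  "grass_onb k W = (SOME b. onb W k b)"

lemma onb_grass_onb: "W \<in> grass k \<Longrightarrow> k \<ge> 1 \<Longrightarrow> onb W k (grass_onb k W)"
  unfolding grass_onb_def using grass_onb_exists by (metis someI_ex)

context
  fixes V :: "'a::real_inner set" and k :: nat and c :: "nat \<Rightarrow> 'a"
  assumes c: "onb V k c"
begin

lemma inner_diff_onb_expansion:
  assumes "v \<in> V"
  shows "inner (x - (\<Sum>j<k. inner x (c j) *\<^sub>R c j)) v = 0"
proof -
  obtain \<beta> where v: "v = (\<Sum>i<k. \<beta> i *\<^sub>R c i)"
    using assms c unfolding onb_def by (metis span_image_lessThanE)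
  have "inner (x - (\<Sum>j<k. inner x (c j) *\<^sub>R c j)) (c l) = 0" if "l < k" for l
    using that by (simp add: inner_diff_left inner_sum_orthonormal_seq[OF onb_imp_orthonormal_seq[OF c]])
  then show ?thesis by (simp add: v inner_sum_right)
qed

lemma proj_onb_expansion: "proj V x = (\<Sum>j<k. inner x (c j) *\<^sub>R c j)"
proof -
  define y where "y = (\<Sum>j<k. inner x (c j) *\<^sub>R c j)"
  have span: "span (c ` {..<k}) = V" using c unfolding onb_def by auto
  then have "subspace V" by (metis subspace_span)
  have "y \<in> V" unfolding y_def using sum_in_span_image_lessThan span by metis
  moreover have orth: "\<forall>v\<in>V. inner (x - y) v = 0"
    unfolding y_def using inner_diff_onb_expansion by blast
  moreover have "y' = y" if y': "y' \<in> V" "\<forall>v\<in>V. inner (x - y') v = 0" for y'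
  proof -
    have "y' - y \<in> V" using y' \<open>y \<in> V\<close> \<open>subspace V\<close> by (simp add: subspace_diff)
    then have "inner (y' - y) (y' - y) = inner (x - y) (y' - y) - inner (x - y') (y' - y)"
      by (simp add: inner_diff_left inner_diff_right)
    also have "\<dots> = 0" using \<open>y' - y \<in> V\<close> y'(2) orth by simp
    finally show "y' = y" by simp
  qed
  ultimately show ?thesis
    unfolding proj_def y_def[symmetric] by (intro the_equality) blast+
qed

lemma proj_in_onb: "proj V x \<in> V"
  using c sum_in_span_image_lessThan unfolding proj_onb_expansion onb_def by metis

lemma inner_proj_onb: "v \<in> V \<Longrightarrow> inner (proj V x) v = inner x v"
  using inner_diff_onb_expansion[of v x] by (simp add: proj_onb_expansion inner_diff_left)

lemma bounded_linear_proj_onb: "bounded_linear (proj V)"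
  unfolding proj_onb_expansion[abs_def]
  by (intro bounded_linear_sum bounded_linear_scaleR_const bounded_linear_inner_left)

lemma norm_proj_pythagoras: "norm (proj V x) ^ 2 + norm (x - proj V x) ^ 2 = norm x ^ 2"
proof -
  have "inner (proj V x) (proj V x) = inner x (proj V x)"
    using proj_in_onb inner_proj_onb by blast
  moreover have "inner (x - proj V x) (x - proj V x)
      = inner x x - 2 * inner x (proj V x) + inner (proj V x) (proj V x)"
    by (simp add: inner_diff_left inner_diff_right inner_commute[of "proj V x" x])
  ultimately show ?thesis by (simp only: power2_norm_eq_inner)
qed

lemma norm_proj_le: "norm (proj V x) \<le> norm x"
proof (rule power2_le_imp_le)
  show "norm (proj V x) ^ 2 \<le> norm x ^ 2"
    using norm_proj_pythagoras[of x] zero_le_power2[of "norm (x - proj V x)"] by linarith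
qed simp

lemma in_if_norm_proj_eq:
  assumes "norm (proj V x) = norm x"
  shows "x \<in> V"
proof -
  have "x - proj V x = 0" using norm_proj_pythagoras[of x] assms by simp
  then show ?thesis using proj_in_onb[of x] by (metis right_minus_eq)
qed

end

lemma bounded_linear_proj: "V \<in> grass k \<Longrightarrow> k \<ge> 1 \<Longrightarrow> bounded_linear (proj V)"
  using bounded_linear_proj_onb[OF onb_grass_onb] by blast

section \<open>Gram determinants\<close>

definition gram_det :: "nat \<Rightarrow> (nat \<Rightarrow> 'a::real_inner) \<Rightarrow> real" where
  "gram_det k v = leib_det k (\<lambda>i j. inner (v i) (v j))"

definition mat_of_entries :: "nat \<Rightarrow> (nat \<Rightarrow> nat \<Rightarrow> real) \<Rightarrow> real mat" where
  "mat_of_entries k f = Matrix.mat k k (\<lambda>(i, j). f i j)"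

lemma mat_of_entries_carrier [simp]: "mat_of_entries k f \<in> carrier_mat k k"
  unfolding mat_of_entries_def by simp

lemma dim_mat_of_entries [simp]: "dim_row (mat_of_entries k f) = k" "dim_col (mat_of_entries k f) = k"
  unfolding mat_of_entries_def by simp_all

lemma mat_of_entries_cong:
  "(\<And>i j. i < k \<Longrightarrow> j < k \<Longrightarrow> f i j = g i j) \<Longrightarrow> mat_of_entries k f = mat_of_entries k g"
  unfolding mat_of_entries_def by (rule eq_matI) auto

lemma transpose_mat_of_entries: "transpose_mat (mat_of_entries k f) = mat_of_entries k (\<lambda>i j. f j i)"
  unfolding mat_of_entries_def by (rule eq_matI) auto

lemma mat_of_entries_mult_transpose:
  "mat_of_entries k A * mat_of_entries k G * transpose_mat (mat_of_entries k A)
     = mat_of_entries k (\<lambda>i j. \<Sum>l<k. \<Sum>m<k. A i l * A j m * G l m)"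
proof (rule eq_matI)
  fix i j assume "i < dim_row (mat_of_entries k (\<lambda>i j. \<Sum>l<k. \<Sum>m<k. A i l * A j m * G l m))"
    "j < dim_col (mat_of_entries k (\<lambda>i j. \<Sum>l<k. \<Sum>m<k. A i l * A j m * G l m))"
  then have "i < k" "j < k" by (auto simp: mat_of_entries_def)
  then show "(mat_of_entries k A * mat_of_entries k G * transpose_mat (mat_of_entries k A)) $$ (i, j)
      = mat_of_entries k (\<lambda>i j. \<Sum>l<k. \<Sum>m<k. A i l * A j m * G l m) $$ (i, j)"
    by (simp add: mat_of_entries_def scalar_prod_def lessThan_atLeast0 sum_distrib_right,
        subst sum.swap, intro sum.cong refl, simp add: mult_ac)
qed (auto simp: mat_of_entries_def)

lemma leib_det_eq_det: "leib_det k f = Determinant.det (mat_of_entries k f)"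
proof -
  have "(\<Prod>i = 0..<k. f i (p i)) = (\<Prod>i = 0..<k. mat_of_entries k f $$ (i, p i))"
    if "p permutes {0..<k}" for p
    using permutes_in_image[OF that] by (intro prod.cong) (auto simp: mat_of_entries_def)
  then show ?thesis
    unfolding leib_det_def Determinant.det_def by (simp add: lessThan_atLeast0 mat_of_entries_def)
qed

lemma det_mat_of_entries_lower_triangular:
  assumes "\<And>i j. i < j \<Longrightarrow> j < k \<Longrightarrow> A i j = 0"
  shows "Determinant.det (mat_of_entries k A) = (\<Prod>i<k. A i i)"
proof -
  have "Determinant.det (mat_of_entries k A) = prod_list (diag_mat (mat_of_entries k A))"
    by (rule det_lower_triangular[of k]) (auto simp: mat_of_entries_def assms)
  also have "diag_mat (mat_of_entries k A) = map (\<lambda>i. A i i) [0..<k]"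
    by (auto simp: diag_mat_def mat_of_entries_def)
  also have "prod_list (map (\<lambda>i. A i i) [0..<k]) = (\<Prod>i<k. A i i)"
    by (induct k) auto
  finally show ?thesis .
qed

lemma gram_det_change_basis:
  fixes d e :: "nat \<Rightarrow> 'a::real_inner"
  assumes "\<And>i. i < k \<Longrightarrow> d i = (\<Sum>l<k. A i l *\<^sub>R e l)"
  shows "gram_det k d = (Determinant.det (mat_of_entries k A))\<^sup>2 * gram_det k e"
proof -
  let ?G = "mat_of_entries k (\<lambda>i j. inner (e i) (e j))"
  have "mat_of_entries k (\<lambda>i j. inner (d i) (d j))
      = mat_of_entries k (\<lambda>i j. \<Sum>l<k. \<Sum>m<k. A i l * A j m * inner (e l) (e m))"
    using assms
    by (intro mat_of_entries_cong)
       (simp add: inner_sum_left inner_sum_right sum_distrib_left mult_ac, rule sum.swap)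
  also have "\<dots> = mat_of_entries k A * ?G * transpose_mat (mat_of_entries k A)"
    by (rule mat_of_entries_mult_transpose[symmetric])
  finally have "gram_det k d = Determinant.det (mat_of_entries k A * ?G * transpose_mat (mat_of_entries k A))"
    unfolding gram_det_def leib_det_eq_det by simp
  also have "\<dots> = Determinant.det (mat_of_entries k A * ?G) * Determinant.det (transpose_mat (mat_of_entries k A))"
    by (rule det_mult[of _ k]) (auto intro: mult_carrier_mat)
  also have "\<dots> = Determinant.det (mat_of_entries k A) * gram_det k e * Determinant.det (mat_of_entries k A)"
    by (simp add: det_mult[of _ k] det_transpose[of _ k] gram_det_def leib_det_eq_det)
  finally show ?thesis by (simp add: power2_eq_square)
qed

lemma mat_of_entries_orthonormal_seq:
  "orthonormal_seq k e \<Longrightarrow> mat_of_entries k (\<lambda>i j. inner (e i) (e j)) = 1\<^sub>m k"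
  unfolding mat_of_entries_def orthonormal_seq_def by (intro eq_matI) auto

lemma gram_det_orthonormal_seq: "orthonormal_seq k e \<Longrightarrow> gram_det k e = 1"
  unfolding gram_det_def leib_det_eq_det by (simp add: mat_of_entries_orthonormal_seq)

lemma gram_det_eq_0_if_not_lin_indep:
  fixes u :: "nat \<Rightarrow> 'a::real_inner"
  assumes "\<not> lin_indep_seq k u"
  shows "gram_det k u = 0"
proof -
  obtain \<alpha> i where \<alpha>: "(\<Sum>i<k. \<alpha> i *\<^sub>R u i) = 0" "i < k" "\<alpha> i \<noteq> 0"
    using assms unfolding lin_indep_seq_def by auto
  let ?G = "mat_of_entries k (\<lambda>i j. inner (u i) (u j))" and ?v = "Matrix.vec k \<alpha>"
  have "?v \<noteq> 0\<^sub>v k" using \<alpha> by (metis index_vec index_zero_vec(1))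
  moreover have "?G *\<^sub>v ?v = 0\<^sub>v k"
  proof (rule eq_vecI)
    fix j assume "j < dim_vec (0\<^sub>v k :: real Matrix.vec)"
    then have j: "j < k" by simp
    have "(?G *\<^sub>v ?v) $ j = inner (u j) (\<Sum>l<k. \<alpha> l *\<^sub>R u l)"
      using j by (simp add: mat_of_entries_def scalar_prod_def lessThan_atLeast0 inner_sum_right mult.commute)
    then show "(?G *\<^sub>v ?v) $ j = 0\<^sub>v k $ j" using j \<alpha> by simp
  qed simp
  ultimately have "Determinant.det ?G = 0"
    by (subst det_0_iff_vec_prod_zero[of _ k]) (auto intro!: exI[of _ ?v])
  then show ?thesis unfolding gram_det_def leib_det_eq_det .
qed

text \<open>Gram--Schmidt makes the coefficient matrix lower triangular, with diagonal entries
  \<open>\<langle>u\<^sub>i, e\<^sub>i\<rangle>\<close>.\<close>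
lemma gram_det_eq_prod_sq:
  fixes u :: "nat \<Rightarrow> 'a::real_inner"
  assumes "lin_indep_seq k u"
  obtains d where "gram_det k u = (\<Prod>i<k. d i)\<^sup>2" and "\<And>i. i < k \<Longrightarrow> \<bar>d i\<bar> \<le> norm (u i)"
proof -
  obtain e where e: "orthonormal_seq k e" and tri: "\<And>i. i < k \<Longrightarrow> u i \<in> span (e ` {..<Suc i})"
    and "span (e ` {..<k}) = span (u ` {..<k})"
    using gram_schmidt_seq[OF assms] by metis
  define A where "A i j = inner (u i) (e j)" for i j
  have expansion: "u i = (\<Sum>l<k. A i l *\<^sub>R e l)" if "i < k" for i
  proof -
    have "u i \<in> span (e ` {..<k})"
      using tri[OF that] span_image_lessThan_mono[of "Suc i" k e] that by auto
    then show ?thesis unfolding A_def by (rule orthonormal_seq_expansion[OF e])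
  qed
  have "gram_det k u = (Determinant.det (mat_of_entries k A))\<^sup>2 * gram_det k e"
    using expansion by (rule gram_det_change_basis)
  also have "gram_det k e = 1" using e by (rule gram_det_orthonormal_seq)
  also have "Determinant.det (mat_of_entries k A) = (\<Prod>i<k. A i i)"
  proof (rule det_mat_of_entries_lower_triangular)
    fix i j assume ij: "i < j" "j < k"
    have "u i \<in> span (e ` {..<Suc i})" using tri ij by simp
    then obtain \<beta> where "u i = (\<Sum>l<Suc i. \<beta> l *\<^sub>R e l)" by (rule span_image_lessThanE)
    then have "A i j = (\<Sum>l<Suc i. \<beta> l * inner (e l) (e j))"
      unfolding A_def by (simp only: inner_sum_left inner_scaleR_left)
    also have "\<dots> = 0" using e ij unfolding orthonormal_seq_def by (intro sum.neutral) auto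
    finally show "A i j = 0" .
  qed
  finally have "gram_det k u = (\<Prod>i<k. A i i)\<^sup>2" by simp
  moreover have "\<bar>A i i\<bar> \<le> norm (u i)" if "i < k" for i
    using Cauchy_Schwarz_ineq2[of "u i" "e i"] orthonormal_seq_norm[OF e that]
    unfolding A_def by simp
  ultimately show thesis using that by blast
qed

lemma gram_det_nonneg: "0 \<le> gram_det k u"
proof (cases "lin_indep_seq k u")
  case True
  then obtain d where "gram_det k u = (\<Prod>i<k. d i)\<^sup>2" using gram_det_eq_prod_sq[OF True] by blast
  then show ?thesis by simp
qed (simp add: gram_det_eq_0_if_not_lin_indep)

lemma gram_det_le_prod_norm: "gram_det k u \<le> (\<Prod>i<k. norm (u i))\<^sup>2"
proof (cases "lin_indep_seq k u")
  case True
  then obtain d where d: "gram_det k u = (\<Prod>i<k. d i)\<^sup>2" "\<And>i. i < k \<Longrightarrow> \<bar>d i\<bar> \<le> norm (u i)"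
    using gram_det_eq_prod_sq[OF True] by blast
  have "(\<Prod>i<k. d i)\<^sup>2 = (\<Prod>i<k. \<bar>d i\<bar>)\<^sup>2" by (simp flip: abs_prod)
  also have "\<dots> \<le> (\<Prod>i<k. norm (u i))\<^sup>2"
    using d(2) by (intro power_mono prod_mono) (auto simp: prod_nonneg)
  finally show ?thesis using d(1) by simp
qed (simp add: gram_det_eq_0_if_not_lin_indep)

lemma tendsto_gram_det:
  fixes v :: "nat \<Rightarrow> nat \<Rightarrow> 'a::real_inner"
  assumes "\<And>i. i < k \<Longrightarrow> (\<lambda>n. v n i) \<longlonglongrightarrow> w i"
  shows "(\<lambda>n. gram_det k (v n)) \<longlonglongrightarrow> gram_det k w"
  unfolding gram_det_def leib_det_def
proof (intro tendsto_sum tendsto_mult_left tendsto_prod tendsto_inner)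
  fix p i assume p: "p \<in> {p. p permutes {..<k}}" and i: "i \<in> {..<k}"
  then show "(\<lambda>n. v n i) \<longlonglongrightarrow> w i" using assms by auto
  have "p i \<in> {..<k}" using p i permutes_in_image by fastforce
  then show "(\<lambda>n. v n (p i)) \<longlonglongrightarrow> w (p i)" using assms by auto
qed

section \<open>The determinant of a projection between subspaces\<close>

lemma mdet_eq_sqrt_gram_det:
  "W \<in> grass k \<Longrightarrow> mdet L W = sqrt (gram_det k (\<lambda>i. L (grass_onb k W i)))"
  unfolding grass_def mdet_def gram_det_def grass_onb_def Let_def by simp

lemma mdet_nonneg: "W \<in> grass k \<Longrightarrow> 0 \<le> mdet L W"
  by (simp add: mdet_eq_sqrt_gram_det gram_det_nonneg)

lemma mdet_proj_eq_abs_det: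
  assumes "W \<in> grass k" "onb V k c"
  shows "mdet (proj V) W = \<bar>Determinant.det (mat_of_entries k (\<lambda>i j. inner (grass_onb k W i) (c j)))\<bar>"
proof -
  have "gram_det k (\<lambda>i. proj V (grass_onb k W i))
      = (Determinant.det (mat_of_entries k (\<lambda>i j. inner (grass_onb k W i) (c j))))\<^sup>2 * gram_det k c"
    by (rule gram_det_change_basis) (simp add: proj_onb_expansion[OF assms(2)])
  also have "gram_det k c = 1"
    using assms(2) by (intro gram_det_orthonormal_seq onb_imp_orthonormal_seq)
  finally show ?thesis using mdet_eq_sqrt_gram_det[OF assms(1)] by simp
qed

lemma mdet_proj_commute:
  assumes "V \<in> grass k" "W \<in> grass k" "k \<ge> 1"
  shows "mdet (proj V) W = mdet (proj W) V"
proof -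
  have "mdet (proj V) W
      = \<bar>Determinant.det (mat_of_entries k (\<lambda>i j. inner (grass_onb k W i) (grass_onb k V j)))\<bar>"
    using mdet_proj_eq_abs_det[OF assms(2) onb_grass_onb[OF assms(1,3)]] .
  also have "mat_of_entries k (\<lambda>i j. inner (grass_onb k W i) (grass_onb k V j))
      = transpose_mat (mat_of_entries k (\<lambda>i j. inner (grass_onb k V i) (grass_onb k W j)))"
    by (simp add: transpose_mat_of_entries inner_commute)
  also have "\<bar>Determinant.det \<dots>\<bar> = mdet (proj W) V"
    using mdet_proj_eq_abs_det[OF assms(1) onb_grass_onb[OF assms(2,3)]]
    by (simp add: det_transpose[OF mat_of_entries_carrier])
  finally show ?thesis .
qed

lemma mdet_proj_self:
  assumes "V \<in> grass k" "k \<ge> 1"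
  shows "mdet (proj V) V = 1"
  using mdet_proj_eq_abs_det[OF assms(1) onb_grass_onb[OF assms]]
    mat_of_entries_orthonormal_seq[OF onb_imp_orthonormal_seq[OF onb_grass_onb[OF assms]]]
  by simp

lemma prod_le_factor:
  fixes x :: "nat \<Rightarrow> real"
  assumes "\<And>i. i < k \<Longrightarrow> 0 \<le> x i \<and> x i \<le> 1" "m < k"
  shows "(\<Prod>i<k. x i) \<le> x m"
proof -
  have "(\<Prod>i<k. x i) = x m * (\<Prod>i\<in>{..<k} - {m}. x i)"
    using assms(2) by (simp add: prod.remove)
  also have "\<dots> \<le> x m * 1"
    using assms by (intro mult_left_mono prod_le_1) auto
  finally show ?thesis by simp
qed

text \<open>The images \<open>\<pi>\<^sub>V b\<^sub>i\<close> of an orthonormal basis of \<open>W\<close> have norm at most \<open>1\<close>, so by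
  Hadamard's inequality their Gram determinant can only be \<open>1\<close> if all of them have norm \<open>1\<close>,
  i.e. if all \<open>b\<^sub>i\<close> lie in \<open>V\<close>.\<close>
lemma subset_if_mdet_proj_eq_1:
  assumes "V \<in> grass k" "W \<in> grass k" "k \<ge> 1" "mdet (proj V) W = 1"
  shows "W \<subseteq> V"
proof -
  define b where "b = grass_onb k W"
  define u where "u i = proj V (b i)" for i
  have onbV: "onb V k (grass_onb k V)" using onb_grass_onb[OF assms(1,3)] .
  have onbW: "onb W k b" using onb_grass_onb[OF assms(2,3)] unfolding b_def .
  have norm_u: "norm (u i) \<le> 1" if "i < k" for i
    using norm_proj_le[OF onbV, of "b i"] orthonormal_seq_norm[OF onb_imp_orthonormal_seq[OF onbW] that]
    unfolding u_def by simp
  have "1 = gram_det k u"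
    using assms(4) mdet_eq_sqrt_gram_det[OF assms(2)] unfolding u_def b_def by simp
  also have "\<dots> \<le> (\<Prod>i<k. norm (u i))\<^sup>2" by (rule gram_det_le_prod_norm)
  finally have "1\<^sup>2 \<le> (\<Prod>i<k. norm (u i))\<^sup>2" by simp
  then have prod_ge: "1 \<le> (\<Prod>i<k. norm (u i))"
    by (rule power2_le_imp_le) (simp add: prod_nonneg)
  have "b i \<in> V" if "i < k" for i
  proof (rule in_if_norm_proj_eq[OF onbV])
    have "1 \<le> norm (u i)" using prod_ge prod_le_factor[of k "\<lambda>i. norm (u i)" i] norm_u that by simp
    then show "norm (proj V (b i)) = norm (b i)"
      using norm_u[OF that] orthonormal_seq_norm[OF onb_imp_orthonormal_seq[OF onbW] that]
      unfolding u_def by simp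
  qed
  moreover have "subspace V" using assms(1) unfolding grass_def by simp
  ultimately have "span (b ` {..<k}) \<subseteq> V" by (intro span_minimal) auto
  then show ?thesis using onbW unfolding onb_def by simp
qed

lemma eq_if_mdet_proj_eq_1:
  assumes "V \<in> grass k" "W \<in> grass k" "k \<ge> 1" "mdet (proj V) W = 1"
  shows "V = W"
  using subset_if_mdet_proj_eq_1[OF assms] subset_if_mdet_proj_eq_1[OF assms(2,1,3)]
    assms(4) mdet_proj_commute[OF assms(1-3)] by auto

lemma gdist_nonneg: "V \<in> grass k \<Longrightarrow> W \<in> grass k \<Longrightarrow> k \<ge> 1 \<Longrightarrow> 0 \<le> gdist V W"
  unfolding gdist_def by (intro onorm_pos_le bounded_linear_sub bounded_linear_proj)

lemma tendsto_proj_gdist: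
  assumes "V \<in> grass k" "\<And>n. Z n \<in> grass k" "k \<ge> 1" "(\<lambda>n. gdist V (Z n)) \<longlonglongrightarrow> 0"
  shows "(\<lambda>n. proj (Z n) y) \<longlonglongrightarrow> proj V y"
proof -
  have "(\<lambda>n. proj V y - proj (Z n) y) \<longlonglongrightarrow> 0"
  proof (rule Lim_null_comparison)
    show "\<forall>\<^sub>F n in sequentially. norm (proj V y - proj (Z n) y) \<le> gdist V (Z n) * norm y"
      unfolding gdist_def using assms
      by (intro always_eventually allI onorm[where f="\<lambda>x. proj V x - proj (Z _) x"]
          bounded_linear_sub bounded_linear_proj) auto
    show "(\<lambda>n. gdist V (Z n) * norm y) \<longlonglongrightarrow> 0"
      using tendsto_mult_left_zero[OF assms(4)] by simp
  qed
  then have "(\<lambda>n. proj V y - (proj V y - proj (Z n) y)) \<longlonglongrightarrow> proj V y - 0"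
    by (intro tendsto_diff tendsto_const)
  then show ?thesis by simp
qed

lemma tendsto_mdet_proj_gdist:
  assumes "V \<in> grass k" "Z \<in> grass k" "\<And>n. Zs n \<in> grass k" "k \<ge> 1"
    "(\<lambda>n. gdist Z (Zs n)) \<longlonglongrightarrow> 0"
  shows "(\<lambda>n. mdet (proj V) (Zs n)) \<longlonglongrightarrow> mdet (proj V) Z"
proof -
  have "(\<lambda>n. sqrt (gram_det k (\<lambda>i. proj (Zs n) (grass_onb k V i))))
      \<longlonglongrightarrow> sqrt (gram_det k (\<lambda>i. proj Z (grass_onb k V i)))"
    by (intro tendsto_real_sqrt tendsto_gram_det tendsto_proj_gdist[OF assms(2-5)])
  then show ?thesis
    using mdet_proj_commute[OF assms(1) assms(3) assms(4)] mdet_proj_commute[OF assms(1,2,4)]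
      mdet_eq_sqrt_gram_det[OF assms(1)]
    by simp
qed

lemma space_grass_measure: "space (grass_measure k) = grass k"
  unfolding grass_measure_def by (rule space_measure_of) (auto simp: grass_open_def)

lemma sets_grass_measure_if_grass_open: "grass_open k U \<Longrightarrow> U \<in> sets (grass_measure k)"
  unfolding grass_measure_def by (subst sets_measure_of) (auto simp: grass_open_def)

lemma grass_open_if_sequentially_open:
  assumes "k \<ge> 1" "U \<subseteq> grass k"
    and seq: "\<And>Z Zs. Z \<in> U \<Longrightarrow> (\<And>n. Zs n \<in> grass k) \<Longrightarrow> (\<lambda>n. gdist Z (Zs n)) \<longlonglongrightarrow> 0 \<Longrightarrow>
      \<forall>\<^sub>F n in sequentially. Zs n \<in> U"
  shows "grass_open k U"
  unfolding grass_open_def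
proof (intro conjI ballI assms(2))
  fix Z assume Z: "Z \<in> U"
  show "\<exists>e>0. \<forall>W\<in>grass k. gdist Z W < e \<longrightarrow> W \<in> U"
  proof (rule ccontr)
    assume not_open: "\<not> ?thesis"
    have "\<exists>W\<in>grass k. gdist Z W < 1 / real (Suc n) \<and> W \<notin> U" for n
    proof -
      have "1 / real (Suc n) > 0" by simp
      then show ?thesis using not_open by blast
    qed
    then obtain Zs where Zs: "\<And>n. Zs n \<in> grass k" "\<And>n. gdist Z (Zs n) < 1 / real (Suc n)"
      "\<And>n. Zs n \<notin> U"
      by metis
    have "(\<lambda>n. gdist Z (Zs n)) \<longlonglongrightarrow> 0"
    proof (rule real_tendsto_sandwich[of "\<lambda>_. 0" _ _ "\<lambda>n. 1 / real (Suc n)"])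
      show "\<forall>\<^sub>F n in sequentially. 0 \<le> gdist Z (Zs n)"
        using gdist_nonneg Z Zs(1) assms(1,2) by (intro always_eventually) blast
      show "\<forall>\<^sub>F n in sequentially. gdist Z (Zs n) \<le> 1 / real (Suc n)"
        using Zs(2) by (intro always_eventually allI less_imp_le)
      show "(\<lambda>n. 1 / real (Suc n)) \<longlonglongrightarrow> 0"
        using LIMSEQ_inverse_real_of_nat by (simp add: inverse_eq_divide)
    qed simp
    then have "\<forall>\<^sub>F n in sequentially. Zs n \<in> U" by (rule seq[OF Z Zs(1)])
    then obtain N where "\<forall>n\<ge>N. Zs n \<in> U" unfolding eventually_sequentially by blast
    then show False using Zs(3) by blast
  qed
qed

lemma borel_measurable_grass_measure:
  fixes f :: "'a::real_inner set \<Rightarrow> real"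
  assumes "k \<ge> 1"
    and cont: "\<And>Z Zs. Z \<in> grass k \<Longrightarrow> (\<And>n. Zs n \<in> grass k) \<Longrightarrow> (\<lambda>n. gdist Z (Zs n)) \<longlonglongrightarrow> 0 \<Longrightarrow>
      (\<lambda>n. f (Zs n)) \<longlonglongrightarrow> f Z"
  shows "f \<in> borel_measurable (grass_measure k)"
proof (rule borel_measurableI)
  fix S :: "real set" assume "open S"
  have "grass_open k (f -` S \<inter> grass k)"
  proof (rule grass_open_if_sequentially_open[OF assms(1)])
    fix Z Zs assume Z: "Z \<in> f -` S \<inter> grass k" and Zs: "\<And>n. Zs n \<in> grass k"
      and "(\<lambda>n. gdist Z (Zs n)) \<longlonglongrightarrow> 0"
    then have "\<forall>\<^sub>F n in sequentially. f (Zs n) \<in> S"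
      using \<open>open S\<close> cont by (intro topological_tendstoD) auto
    then show "\<forall>\<^sub>F n in sequentially. Zs n \<in> f -` S \<inter> grass k"
      using Zs by (auto elim: eventually_mono)
  qed auto
  then show "f -` S \<inter> space (grass_measure k) \<in> sets (grass_measure k)"
    unfolding space_grass_measure by (rule sets_grass_measure_if_grass_open)
qed

lemma measurable_mdet_proj:
  assumes "V \<in> grass k" "k \<ge> 1" "T \<in> M \<rightarrow>\<^sub>M grass_measure k"
  shows "(\<lambda>x. mdet (proj V) (T x)) \<in> borel_measurable M"
proof -
  have "mdet (proj V) \<in> borel_measurable (grass_measure k)"
    by (rule borel_measurable_grass_measure[OF assms(2)]) (rule tendsto_mdet_proj_gdist[OF assms(1) _ _ assms(2)])
  then show ?thesis using assms(3) by (rule measurable_compose[rotated])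
qed

section \<open>A countable dense family of subspaces\<close>

lemma span_in_grass_if_lin_indep_seq:
  fixes c :: "nat \<Rightarrow> 'a::real_inner"
  assumes "lin_indep_seq k c"
  shows "span (c ` {..<k}) \<in> grass k"
proof -
  have "inj_on c {..<k}" "independent (c ` {..<k})" using assms by (simp_all add: lin_indep_seq_iff)
  then have "dim (span (c ` {..<k})) = k" by (simp add: dim_eq_card_independent card_image)
  then show ?thesis unfolding grass_def by simp
qed

lemma mdet_proj_span_eq:
  fixes c :: "nat \<Rightarrow> 'a::real_inner"
  assumes "gram_det k c > 0" "Z \<in> grass k" "k \<ge> 1"
  shows "mdet (proj (span (c ` {..<k}))) Z = sqrt (gram_det k (\<lambda>i. proj Z (c i)) / gram_det k c)"
proof -
  define V where "V = span (c ` {..<k})"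
  have V: "V \<in> grass k"
    unfolding V_def using assms(1) gram_det_eq_0_if_not_lin_indep
    by (intro span_in_grass_if_lin_indep_seq) fastforce
  define e where "e = grass_onb k V"
  have e: "onb V k e" unfolding e_def by (rule onb_grass_onb[OF V assms(3)])
  define A where "A i l = inner (c i) (e l)" for i l
  have expansion: "c i = (\<Sum>l<k. A i l *\<^sub>R e l)" if "i < k" for i
  proof -
    have "c i \<in> span (e ` {..<k})" using e that unfolding V_def onb_def by (auto intro: span_base)
    then show ?thesis unfolding A_def by (rule orthonormal_seq_expansion[OF onb_imp_orthonormal_seq[OF e]])
  qed
  have "linear (proj Z)" using bounded_linear_proj[OF assms(2,3)] bounded_linear.linear by blast
  then have "proj Z (c i) = (\<Sum>l<k. A i l *\<^sub>R proj Z (e l))" if "i < k" for i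
    using expansion[OF that] by (simp add: linear_sum linear_cmul)
  then have "gram_det k (\<lambda>i. proj Z (c i)) = (Determinant.det (mat_of_entries k A))\<^sup>2 * gram_det k (\<lambda>i. proj Z (e i))"
    by (rule gram_det_change_basis)
  also have "gram_det k (\<lambda>i. proj Z (e i)) = (mdet (proj Z) V)\<^sup>2"
    unfolding mdet_eq_sqrt_gram_det[OF V] e_def by (rule real_sqrt_pow2[OF gram_det_nonneg, symmetric])
  finally have "gram_det k (\<lambda>i. proj Z (c i)) = (Determinant.det (mat_of_entries k A))\<^sup>2 * (mdet (proj Z) V)\<^sup>2" .
  moreover have "gram_det k c = (Determinant.det (mat_of_entries k A))\<^sup>2"
    using gram_det_change_basis[of k c A e, OF expansion]
      gram_det_orthonormal_seq[OF onb_imp_orthonormal_seq[OF e]] by simp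
  ultimately show ?thesis
    using assms(1) mdet_proj_commute[OF V assms(2,3)] mdet_nonneg[OF V, of "proj Z"]
    unfolding V_def by simp
qed

lemma tendsto_mdet_proj_span:
  fixes c :: "nat \<Rightarrow> nat \<Rightarrow> 'a::real_inner"
  assumes "gram_det k b > 0" "Z \<in> grass k" "k \<ge> 1" "\<And>i. i < k \<Longrightarrow> (\<lambda>n. c n i) \<longlonglongrightarrow> b i"
  shows "(\<lambda>n. mdet (proj (span (c n ` {..<k}))) Z) \<longlonglongrightarrow> mdet (proj (span (b ` {..<k}))) Z"
proof -
  have gram_c: "(\<lambda>n. gram_det k (c n)) \<longlonglongrightarrow> gram_det k b"
    using assms(4) by (rule tendsto_gram_det)
  then have "\<forall>\<^sub>F n in sequentially. gram_det k (c n) > 0"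
    using assms(1) by (rule order_tendstoD(1))
  then have eq: "\<forall>\<^sub>F n in sequentially. sqrt (gram_det k (\<lambda>i. proj Z (c n i)) / gram_det k (c n))
      = mdet (proj (span (c n ` {..<k}))) Z"
    by (rule eventually_mono) (rule mdet_proj_span_eq[symmetric, OF _ assms(2,3)])
  have lim: "(\<lambda>n. sqrt (gram_det k (\<lambda>i. proj Z (c n i)) / gram_det k (c n)))
      \<longlonglongrightarrow> sqrt (gram_det k (\<lambda>i. proj Z (b i)) / gram_det k b)"
    using assms(1) bounded_linear.tendsto[OF bounded_linear_proj[OF assms(2,3)] assms(4)]
    by (intro tendsto_real_sqrt tendsto_divide gram_c tendsto_gram_det) auto
  show ?thesis
    unfolding mdet_proj_span_eq[OF assms(1-3)] by (rule Lim_transform_eventually[OF lim eq])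
qed

definition countable_dense_set :: "'a::second_countable_topology set" where
  "countable_dense_set = (SOME D. countable D \<and> (\<forall>X. open X \<longrightarrow> X \<noteq> {} \<longrightarrow> (\<exists>d\<in>D. d \<in> X)))"

lemma countable_dense_set:
  "countable (countable_dense_set :: 'a::second_countable_topology set)"
  "closure (countable_dense_set :: 'a set) = UNIV"
proof -
  have D: "countable (countable_dense_set :: 'a set)"
    "\<And>X. open X \<Longrightarrow> X \<noteq> {} \<Longrightarrow> \<exists>d\<in>countable_dense_set :: 'a set. d \<in> X"
    using someI_ex[OF countable_dense_exists] unfolding countable_dense_set_def by blast+
  show "countable (countable_dense_set :: 'a set)" by (rule D(1))
  have "x \<in> closure countable_dense_set" for x :: 'a
    unfolding closure_iff_nhds_not_empty
  proof (intro allI impI)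
    fix A S assume "S \<subseteq> A" "open S" "x \<in> S"
    then show "countable_dense_set \<inter> A \<noteq> {}" using D(2)[of S] by blast
  qed
  then show "closure (countable_dense_set :: 'a set) = UNIV" by blast
qed

definition dense_grass :: "nat \<Rightarrow> 'a::{real_inner,second_countable_topology} set set" where
  "dense_grass k = {V \<in> grass k. \<exists>cs. set cs \<subseteq> countable_dense_set \<and> V = span (set cs)}"

lemma countable_dense_grass: "countable (dense_grass k)"
proof -
  have "dense_grass k \<subseteq> (\<lambda>cs. span (set cs)) ` lists countable_dense_set"
    unfolding dense_grass_def by auto
  then show ?thesis
    using countable_lists[OF countable_dense_set(1)] countable_image countable_subset by metis
qed

lemma dense_grass_subset: "dense_grass k \<subseteq> grass k"
  unfolding dense_grass_def by auto

lemma dense_grass_approx: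
  fixes W :: "'a::{real_inner,second_countable_topology} set"
  assumes W: "W \<in> grass k" and k: "k \<ge> 1"
  shows "\<exists>Vs. (\<forall>\<^sub>F n in sequentially. Vs n \<in> dense_grass k) \<and>
     (\<forall>Z\<in>grass k. (\<lambda>n. mdet (proj (Vs n)) Z) \<longlonglongrightarrow> mdet (proj W) Z)"
proof -
  define b where "b = grass_onb k W"
  have b: "onb W k b" unfolding b_def by (rule onb_grass_onb[OF W k])
  then have gram_b: "gram_det k b = 1" by (intro gram_det_orthonormal_seq onb_imp_orthonormal_seq)
  have "\<exists>s. (\<forall>n. s n \<in> countable_dense_set) \<and> s \<longlonglongrightarrow> b i" for i
    using countable_dense_set(2) closure_sequential by blast
  then obtain s where s: "\<And>i n. s i n \<in> countable_dense_set" "\<And>i. s i \<longlonglongrightarrow> b i" by metis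
  define Vs where "Vs n = span ((\<lambda>i. s i n) ` {..<k})" for n
  have "\<forall>\<^sub>F n in sequentially. gram_det k (\<lambda>i. s i n) > 0"
    using tendsto_gram_det[of k "\<lambda>n i. s i n" b] s(2) gram_b by (intro order_tendstoD(1)) auto
  then have "\<forall>\<^sub>F n in sequentially. Vs n \<in> dense_grass k"
  proof (rule eventually_mono)
    fix n assume "gram_det k (\<lambda>i. s i n) > 0"
    then have "Vs n \<in> grass k"
      unfolding Vs_def using gram_det_eq_0_if_not_lin_indep
      by (intro span_in_grass_if_lin_indep_seq) fastforce
    moreover have "Vs n = span (set (map (\<lambda>i. s i n) [0..<k]))"
      unfolding Vs_def by (simp add: lessThan_atLeast0)
    moreover have "set (map (\<lambda>i. s i n) [0..<k]) \<subseteq> countable_dense_set" using s(1) by auto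
    ultimately show "Vs n \<in> dense_grass k" unfolding dense_grass_def by blast
  qed
  moreover have "W = span (b ` {..<k})" using b unfolding onb_def by simp
  then have "(\<lambda>n. mdet (proj (Vs n)) Z) \<longlonglongrightarrow> mdet (proj W) Z" if "Z \<in> grass k" for Z
    unfolding Vs_def using gram_b that k s(2) by (simp add: tendsto_mdet_proj_span)
  ultimately show ?thesis by blast
qed

definition measure_add :: "'a measure \<Rightarrow> 'a measure \<Rightarrow> 'a measure" where
  "measure_add M N = measure_of (space M) (sets M) (\<lambda>A. emeasure M A + emeasure N A)"

lemma sets_measure_add [simp]: "sets (measure_add M N) = sets M"
  unfolding measure_add_def by (rule sets.sets_measure_of_eq)

lemma space_measure_add [simp]: "space (measure_add M N) = space M"
  unfolding measure_add_def by (rule sets.space_measure_of_eq)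

lemma emeasure_measure_add:
  assumes "sets M = sets N" "A \<in> sets M"
  shows "emeasure (measure_add M N) A = emeasure M A + emeasure N A"
proof -
  have "countably_additive (sets M) (\<lambda>A. emeasure M A + emeasure N A)"
  proof (rule countably_additiveI)
    fix A :: "nat \<Rightarrow> 'a set"
    assume "range A \<subseteq> sets M" "disjoint_family A" "\<Union> (range A) \<in> sets M"
    then show "(\<Sum>i. emeasure M (A i) + emeasure N (A i))
        = emeasure M (\<Union> (range A)) + emeasure N (\<Union> (range A))"
      using assms(1) by (simp add: suminf_add[symmetric] suminf_emeasure)
  qed
  moreover have "positive (sets M) (\<lambda>A. emeasure M A + emeasure N A)"
    unfolding positive_def by simp
  ultimately show ?thesis
    unfolding measure_add_def using assms(2)
    by (subst emeasure_measure_of[where A="sets M" and \<Omega>="space M"])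
       (auto simp: sets.sigma_sets_eq sets.space_closed)
qed

lemma absolutely_continuous_measure_add:
  assumes "sets M = sets N"
  shows "absolutely_continuous (measure_add M N) M" "absolutely_continuous (measure_add M N) N"
proof -
  have "A \<in> null_sets M \<and> A \<in> null_sets N" if "A \<in> null_sets (measure_add M N)" for A
  proof -
    have "A \<in> sets M" using null_setsD2[OF that] by simp
    then have "emeasure M A + emeasure N A = 0"
      using null_setsD1[OF that] by (simp add: emeasure_measure_add[OF assms])
    then show ?thesis using \<open>A \<in> sets M\<close> assms by (simp add: null_sets_def)
  qed
  then show "absolutely_continuous (measure_add M N) M" "absolutely_continuous (measure_add M N) N"
    unfolding absolutely_continuous_def by auto
qed

lemma sigma_finite_measure_add:
  assumes sets: "sets M = sets N" and "sigma_finite_measure M" "sigma_finite_measure N"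
  shows "sigma_finite_measure (measure_add M N)"
proof
  obtain A :: "nat \<Rightarrow> 'a set" where A: "range A \<subseteq> sets M" "(\<Union>i. A i) = space M"
    "\<And>i. emeasure M (A i) \<noteq> \<infinity>"
    using sigma_finite_measure.sigma_finite[OF assms(2)] by metis
  obtain B :: "nat \<Rightarrow> 'a set" where B: "range B \<subseteq> sets N" "(\<Union>i. B i) = space N"
    "\<And>i. emeasure N (B i) \<noteq> \<infinity>"
    using sigma_finite_measure.sigma_finite[OF assms(3)] by metis
  let ?C = "(\<lambda>(i, j). A i \<inter> B j) ` UNIV"
  have "?C \<subseteq> sets M" using A(1) B(1) sets by auto
  moreover have "emeasure (measure_add M N) (A i \<inter> B j) \<noteq> \<infinity>" for i j
  proof -
    have "A i \<inter> B j \<in> sets M" using A(1) B(1) sets by auto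
    moreover have "emeasure M (A i \<inter> B j) < \<infinity>"
      using A(1) A(3)[of i] emeasure_mono[of "A i \<inter> B j" "A i" M] by (auto simp: less_top)
    moreover have "emeasure N (A i \<inter> B j) < \<infinity>"
      using B(1) B(3)[of j] emeasure_mono[of "A i \<inter> B j" "B j" N] by (auto simp: less_top)
    ultimately show ?thesis by (simp add: emeasure_measure_add[OF sets] less_top)
  qed
  moreover have "\<Union> ?C = space M"
  proof
    show "\<Union> ?C \<subseteq> space M" using A(2) by auto
    show "space M \<subseteq> \<Union> ?C"
    proof
      fix x assume "x \<in> space M"
      then obtain i j where "x \<in> A i" "x \<in> B j"
        using A(2) B(2) sets_eq_imp_space_eq[OF sets] by blast
      then show "x \<in> \<Union> ?C" by blast
    qed
  qed
  ultimately show "\<exists>C. countable C \<and> C \<subseteq> sets (measure_add M N) \<and>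
      \<Union> C = space (measure_add M N) \<and> (\<forall>a\<in>C. emeasure (measure_add M N) a \<noteq> \<infinity>)"
    by (intro exI[of _ ?C]) auto
qed

lemma
  assumes sets: "sets M = sets N" and "sigma_finite_measure M" "sigma_finite_measure N"
  shows density_RN_deriv_measure_add:
      "density (measure_add M N) (RN_deriv (measure_add M N) M) = M"
      "density (measure_add M N) (RN_deriv (measure_add M N) N) = N"
    and AE_RN_deriv_measure_add_finite:
      "AE x in measure_add M N. RN_deriv (measure_add M N) M x \<noteq> \<infinity>"
      "AE x in measure_add M N. RN_deriv (measure_add M N) N x \<noteq> \<infinity>"
proof -
  interpret sigma_finite_measure "measure_add M N"
    using assms by (rule sigma_finite_measure_add)
  note ac = absolutely_continuous_measure_add[OF sets]
  show "density (measure_add M N) (RN_deriv (measure_add M N) M) = M"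
    using ac(1) by (rule density_RN_deriv) simp
  show "density (measure_add M N) (RN_deriv (measure_add M N) N) = N"
    using ac(2) by (rule density_RN_deriv) (simp add: sets)
  show "AE x in measure_add M N. RN_deriv (measure_add M N) M x \<noteq> \<infinity>"
    using assms(2) ac(1) by (rule RN_deriv_finite) simp
  show "AE x in measure_add M N. RN_deriv (measure_add M N) N x \<noteq> \<infinity>"
    using assms(3) ac(2) by (rule RN_deriv_finite) (simp add: sets)
qed

lemma AE_RN_deriv_measure_add_eq:
  fixes f1 f2 :: "'a \<Rightarrow> ennreal"
  assumes sets: "sets M1 = sets M2"
    and "sigma_finite_measure M1" "sigma_finite_measure M2"
    and f1: "f1 \<in> borel_measurable M1" and f2: "f2 \<in> borel_measurable M2"
    and eq: "\<And>A. A \<in> sets M1 \<Longrightarrow> (\<integral>\<^sup>+x\<in>A. f1 x \<partial>M1) = (\<integral>\<^sup>+x\<in>A. f2 x \<partial>M2)"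
  defines "\<mu> \<equiv> measure_add M1 M2"
  shows "AE x in \<mu>. RN_deriv \<mu> M1 x * f1 x = RN_deriv \<mu> M2 x * f2 x"
proof -
  interpret \<mu>: sigma_finite_measure \<mu>
    unfolding \<mu>_def using assms(1-3) by (rule sigma_finite_measure_add)
  note density = density_RN_deriv_measure_add[OF assms(1-3), folded \<mu>_def]
  have [measurable]: "f1 \<in> borel_measurable \<mu>" "f2 \<in> borel_measurable \<mu>"
    using f1 f2 unfolding \<mu>_def using sets by (simp_all cong: measurable_cong_sets)
  show ?thesis
  proof (rule \<mu>.density_unique2)
    fix A assume A: "A \<in> sets \<mu>"
    have "(\<integral>\<^sup>+x\<in>A. RN_deriv \<mu> M1 x * f1 x \<partial>\<mu>) = (\<integral>\<^sup>+x\<in>A. f1 x \<partial>M1)"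
      using A by (subst (2) density(1)[symmetric]) (simp add: nn_integral_density mult_ac)
    also have "\<dots> = (\<integral>\<^sup>+x\<in>A. f2 x \<partial>M2)" using A eq by (simp add: \<mu>_def)
    also have "\<dots> = (\<integral>\<^sup>+x\<in>A. RN_deriv \<mu> M2 x * f2 x \<partial>\<mu>)"
      using A by (subst (1) density(2)[symmetric]) (simp add: nn_integral_density mult_ac)
    finally show "(\<integral>\<^sup>+x\<in>A. RN_deriv \<mu> M1 x * f1 x \<partial>\<mu>) = (\<integral>\<^sup>+x\<in>A. RN_deriv \<mu> M2 x * f2 x \<partial>\<mu>)" .
  qed measurable
qed

section \<open>Uniqueness of densities against a separating kernel\<close>

text \<open>The properties of \<open>F V W = det(\<pi>\<^sub>V|\<^sub>W)\<close> on \<open>G = grass k\<close> that the uniqueness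
  argument uses.\<close>
locale separating_kernel =
  fixes G D :: "'g set" and F :: "'g \<Rightarrow> 'g \<Rightarrow> real"
  assumes nonneg: "\<And>V W. V \<in> G \<Longrightarrow> W \<in> G \<Longrightarrow> 0 \<le> F V W"
    and commute: "\<And>V W. V \<in> G \<Longrightarrow> W \<in> G \<Longrightarrow> F V W = F W V"
    and diagonal: "\<And>V. V \<in> G \<Longrightarrow> F V V = 1"
    and eq_if_eq_1: "\<And>V W. V \<in> G \<Longrightarrow> W \<in> G \<Longrightarrow> F V W = 1 \<Longrightarrow> V = W"
    and countable_D: "countable D" and D_subset: "D \<subseteq> G"
    and approx: "\<And>W. W \<in> G \<Longrightarrow> \<exists>Vs. (\<forall>\<^sub>F n in sequentially. Vs n \<in> D) \<and>
                  (\<forall>Z\<in>G. (\<lambda>n. F (Vs n) Z) \<longlonglongrightarrow> F W Z)"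
begin

lemma scaled_eq_if_scaled_eq_on_D:
  assumes "W \<in> G" "W1 \<in> G" "W2 \<in> G" "\<forall>V\<in>D. a1 * F V W1 = a2 * F V W2"
  shows "a1 * F W W1 = a2 * F W W2"
proof -
  obtain Vs where Vs: "\<forall>\<^sub>F n in sequentially. Vs n \<in> D" "\<forall>Z\<in>G. (\<lambda>n. F (Vs n) Z) \<longlonglongrightarrow> F W Z"
    using approx[OF assms(1)] by blast
  have "(\<lambda>n. a1 * F (Vs n) W1) \<longlonglongrightarrow> a1 * F W W1"
    using Vs(2) assms(2) by (intro tendsto_mult_left) auto
  moreover have "\<forall>\<^sub>F n in sequentially. a1 * F (Vs n) W1 = a2 * F (Vs n) W2"
    using Vs(1) by (rule eventually_mono) (use assms(4) in blast)
  ultimately have "(\<lambda>n. a2 * F (Vs n) W2) \<longlonglongrightarrow> a1 * F W W1"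
    by (rule Lim_transform_eventually)
  moreover have "(\<lambda>n. a2 * F (Vs n) W2) \<longlonglongrightarrow> a2 * F W W2"
    using Vs(2) assms(3) by (intro tendsto_mult_left) auto
  ultimately show ?thesis using LIMSEQ_unique by blast
qed

text \<open>Evaluating at \<open>W = W\<^sub>1\<close> and \<open>W = W\<^sub>2\<close> gives \<open>a\<^sub>1 = a\<^sub>2 f\<close> and \<open>a\<^sub>1 f = a\<^sub>2\<close> with
  \<open>f = F W\<^sub>1 W\<^sub>2 \<ge> 0\<close>.\<close>
lemma eq_if_scaled_eq_on_D:
  assumes "W1 \<in> G" "W2 \<in> G" "0 \<le> a1" "\<forall>V\<in>D. a1 * F V W1 = a2 * F V W2"
  shows "a1 = a2 \<and> (a1 \<noteq> 0 \<longrightarrow> W1 = W2)"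
proof -
  define f where "f = F W1 W2"
  have a1: "a1 = a2 * f"
    using scaled_eq_if_scaled_eq_on_D[OF assms(1,1,2,4)] diagonal[OF assms(1)] by (simp add: f_def)
  have a2: "a1 * f = a2"
    using scaled_eq_if_scaled_eq_on_D[OF assms(2,1,2,4)] diagonal[OF assms(2)] commute[OF assms(1,2)]
    by (simp add: f_def)
  show ?thesis
  proof (cases "a1 = 0")
    case False
    have "a1 * (f * f) = a1" by (metis a1 a2 mult.assoc)
    then have "f * f = 1" using False by simp
    then have "f = 1 \<or> f = -1" using power2_eq_1_iff[of f] by (simp add: power2_eq_square)
    moreover have "f \<ge> 0" unfolding f_def using nonneg assms(1,2) by simp
    ultimately have "f = 1" by auto
    then show ?thesis using a2 eq_if_eq_1[OF assms(1,2)] by (simp add: f_def)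
  qed (use a2 in simp)
qed

lemma separating:
  assumes "W1 \<in> G" "W2 \<in> G" "W1 \<noteq> W2"
  shows "\<exists>V\<in>D. F V W1 \<noteq> F V W2"
  using eq_if_scaled_eq_on_D[OF assms(1,2), of 1 1] assms(3) by auto

lemma ennreal_eq_if_scaled_eq_on_D:
  fixes g1 g2 :: ennreal
  assumes "W1 \<in> G" "W2 \<in> G" "g1 \<noteq> \<infinity>" "g2 \<noteq> \<infinity>"
    and "\<forall>V\<in>D. g1 * ennreal (F V W1) = g2 * ennreal (F V W2)"
  shows "g1 = g2 \<and> (g1 \<noteq> 0 \<longrightarrow> W1 = W2)"
proof -
  obtain a1 where a1: "0 \<le> a1" "g1 = ennreal a1" using assms(3) by (cases g1) auto
  obtain a2 where a2: "0 \<le> a2" "g2 = ennreal a2" using assms(4) by (cases g2) auto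
  have "\<forall>V\<in>D. a1 * F V W1 = a2 * F V W2"
  proof
    fix V assume "V \<in> D"
    then have "F V W1 \<ge> 0" "F V W2 \<ge> 0" using nonneg D_subset assms(1,2) by auto
    then have "ennreal (a1 * F V W1) = ennreal (a2 * F V W2)"
      using assms(5) \<open>V \<in> D\<close> a1 a2 by (simp add: ennreal_mult)
    then show "a1 * F V W1 = a2 * F V W2"
      using \<open>F V W1 \<ge> 0\<close> \<open>F V W2 \<ge> 0\<close> a1 a2 by (simp add: ennreal_inj)
  qed
  then show ?thesis using eq_if_scaled_eq_on_D[OF assms(1,2) a1(1)] a1 a2 by auto
qed

lemma sets_disagreement:
  assumes "\<And>x. x \<in> space M \<Longrightarrow> T1 x \<in> G" "\<And>x. x \<in> space M \<Longrightarrow> T2 x \<in> G"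
    and "\<And>V. V \<in> D \<Longrightarrow> (\<lambda>x. F V (T1 x)) \<in> borel_measurable M"
    and "\<And>V. V \<in> D \<Longrightarrow> (\<lambda>x. F V (T2 x)) \<in> borel_measurable M"
  shows "{x \<in> space M. T1 x \<noteq> T2 x} \<in> sets M"
proof -
  have "{x \<in> space M. T1 x \<noteq> T2 x} = (\<Union>V\<in>D. {x \<in> space M. F V (T1 x) \<noteq> F V (T2 x)})"
  proof (intro subset_antisym subsetI)
    fix x assume "x \<in> {x \<in> space M. T1 x \<noteq> T2 x}"
    then obtain V where "V \<in> D" "F V (T1 x) \<noteq> F V (T2 x)" "x \<in> space M"
      using separating assms(1,2) by blast
    then show "x \<in> (\<Union>V\<in>D. {x \<in> space M. F V (T1 x) \<noteq> F V (T2 x)})" by blast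
  qed auto
  also have "\<dots> \<in> sets M"
  proof (rule sets.countable_UN''[OF countable_D])
    fix V assume "V \<in> D"
    note [measurable] = assms(3,4)[OF this]
    show "{x \<in> space M. F V (T1 x) \<noteq> F V (T2 x)} \<in> sets M" by measurable
  qed
  finally show ?thesis .
qed

lemma AE_RN_deriv_eq_if_kernel_integrals_eq:
  fixes M1 M2 :: "'b measure" and T1 T2 :: "'b \<Rightarrow> 'g"
  assumes sets: "sets M1 = sets M2"
    and sf: "sigma_finite_measure M1" "sigma_finite_measure M2"
    and T1: "\<And>x. x \<in> space M1 \<Longrightarrow> T1 x \<in> G" and T2: "\<And>x. x \<in> space M1 \<Longrightarrow> T2 x \<in> G"
    and meas1: "\<And>V. V \<in> G \<Longrightarrow> (\<lambda>x. F V (T1 x)) \<in> borel_measurable M1"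
    and meas2: "\<And>V. V \<in> G \<Longrightarrow> (\<lambda>x. F V (T2 x)) \<in> borel_measurable M2"
    and eq: "\<And>V A. V \<in> G \<Longrightarrow> A \<in> sets M1 \<Longrightarrow>
       (\<integral>\<^sup>+x\<in>A. ennreal (F V (T1 x)) \<partial>M1) = (\<integral>\<^sup>+x\<in>A. ennreal (F V (T2 x)) \<partial>M2)"
  defines "\<mu> \<equiv> measure_add M1 M2"
  shows "AE x in \<mu>. RN_deriv \<mu> M1 x = RN_deriv \<mu> M2 x \<and> (RN_deriv \<mu> M1 x \<noteq> 0 \<longrightarrow> T1 x = T2 x)"
proof -
  have "AE x in \<mu>. RN_deriv \<mu> M1 x * ennreal (F V (T1 x)) = RN_deriv \<mu> M2 x * ennreal (F V (T2 x))"
    if "V \<in> D" for V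
  proof -
    have V: "V \<in> G" using that D_subset by blast
    note [measurable] = meas1[OF V] meas2[OF V]
    show ?thesis
      unfolding \<mu>_def using eq[OF V] by (intro AE_RN_deriv_measure_add_eq[OF sets sf]) measurable
  qed
  then have "AE x in \<mu>. \<forall>V\<in>D.
      RN_deriv \<mu> M1 x * ennreal (F V (T1 x)) = RN_deriv \<mu> M2 x * ennreal (F V (T2 x))"
    by (simp add: AE_ball_countable[OF countable_D])
  then show ?thesis
    using AE_RN_deriv_measure_add_finite[OF sets sf, folded \<mu>_def] AE_space
  proof eventually_elim
    case (elim x)
    then have "x \<in> space M1" by (simp add: \<mu>_def)
    with elim show ?case by (intro ennreal_eq_if_scaled_eq_on_D T1 T2)
  qed
qed

theorem measure_eq_if_kernel_integrals_eq:
  fixes M1 M2 :: "'b measure" and T1 T2 :: "'b \<Rightarrow> 'g"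
  assumes sets: "sets M1 = sets M2"
    and sf: "sigma_finite_measure M1" "sigma_finite_measure M2"
    and T1: "\<And>x. x \<in> space M1 \<Longrightarrow> T1 x \<in> G" and T2: "\<And>x. x \<in> space M1 \<Longrightarrow> T2 x \<in> G"
    and meas1: "\<And>V. V \<in> G \<Longrightarrow> (\<lambda>x. F V (T1 x)) \<in> borel_measurable M1"
    and meas2: "\<And>V. V \<in> G \<Longrightarrow> (\<lambda>x. F V (T2 x)) \<in> borel_measurable M2"
    and eq: "\<And>V A. V \<in> G \<Longrightarrow> A \<in> sets M1 \<Longrightarrow>
       (\<integral>\<^sup>+x\<in>A. ennreal (F V (T1 x)) \<partial>M1) = (\<integral>\<^sup>+x\<in>A. ennreal (F V (T2 x)) \<partial>M2)"
  shows "M1 = M2 \<and> {x \<in> space M1. T1 x \<noteq> T2 x} \<in> null_sets M1"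
proof -
  define \<mu> where "\<mu> = measure_add M1 M2"
  define g1 where "g1 = RN_deriv \<mu> M1"
  define S where "S = {x \<in> space M1. T1 x \<noteq> T2 x}"
  have sets_\<mu>: "sets \<mu> = sets M1" by (simp add: \<mu>_def)
  have g1_meas [measurable]: "g1 \<in> borel_measurable \<mu>" unfolding g1_def by simp
  note density = density_RN_deriv_measure_add[OF sets sf, folded \<mu>_def]
  have key: "AE x in \<mu>. g1 x = RN_deriv \<mu> M2 x \<and> (g1 x \<noteq> 0 \<longrightarrow> T1 x = T2 x)"
    unfolding \<mu>_def g1_def by (rule AE_RN_deriv_eq_if_kernel_integrals_eq[OF assms])
  have "AE x in \<mu>. g1 x = RN_deriv \<mu> M2 x" using key by (rule eventually_mono) blast
  then have "density \<mu> g1 = density \<mu> (RN_deriv \<mu> M2)" by (intro density_cong) simp_all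
  then have "M1 = M2" using density by (simp add: g1_def)
  moreover have S_sets: "S \<in> sets M1"
    unfolding S_def using T1 T2 D_subset meas1 meas2
    by (intro sets_disagreement) (auto simp: measurable_cong_sets[OF sets refl])
  moreover have "emeasure M1 S = 0"
  proof -
    have [measurable]: "S \<in> sets \<mu>" using S_sets sets_\<mu> by simp
    have "emeasure M1 S = emeasure (density \<mu> g1) S" by (simp only: density(1) g1_def)
    also have "\<dots> = (\<integral>\<^sup>+x. g1 x * indicator S x \<partial>\<mu>)"
      using S_sets by (simp add: emeasure_density[OF g1_meas] sets_\<mu>)
    also have "\<dots> = 0"
    proof (subst nn_integral_0_iff_AE)
      show "(\<lambda>x. g1 x * indicator S x) \<in> borel_measurable \<mu>" by measurable
      show "AE x in \<mu>. g1 x * indicator S x = 0"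
        using key by (rule eventually_mono) (auto simp: S_def)
    qed
    finally show ?thesis .
  qed
  ultimately show ?thesis unfolding S_def by (simp add: null_sets_def)
qed

end

lemma separating_kernel_mdet_proj:
  "k \<ge> 1 \<Longrightarrow> separating_kernel (grass k) (dense_grass k :: 'a::{real_inner,second_countable_topology} set set)
     (\<lambda>V W. mdet (proj V) W)"
  by unfold_locales
    (simp_all add: mdet_nonneg mdet_proj_commute mdet_proj_self eq_if_mdet_proj_eq_1
      countable_dense_grass dense_grass_subset dense_grass_approx)

lemma measure_eq_if_mdet_proj_integrals_eq:
  fixes M1 M2 :: "'b measure" and T1 T2 :: "'b \<Rightarrow> ('a::{real_inner,second_countable_topology}) set"
  assumes "k \<ge> 1" "sets M1 = sets M2" "sigma_finite_measure M1" "sigma_finite_measure M2"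
    and T1: "T1 \<in> M1 \<rightarrow>\<^sub>M grass_measure k" and T2: "T2 \<in> M2 \<rightarrow>\<^sub>M grass_measure k"
    and "\<forall>V\<in>grass k. \<forall>A\<in>sets M1.
      (\<integral>\<^sup>+x\<in>A. ennreal (mdet (proj V) (T1 x)) \<partial>M1) = (\<integral>\<^sup>+x\<in>A. ennreal (mdet (proj V) (T2 x)) \<partial>M2)"
  shows "M1 = M2 \<and> {x \<in> space M1. T1 x \<noteq> T2 x} \<in> null_sets M1"
proof (rule separating_kernel.measure_eq_if_kernel_integrals_eq
    [OF separating_kernel_mdet_proj[OF assms(1)] assms(2-4)])
  show "T1 x \<in> grass k" "T2 x \<in> grass k" if "x \<in> space M1" for x
    using that measurable_space[OF T1] measurable_space[OF T2] sets_eq_imp_space_eq[OF assms(2)]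
    by (auto simp: space_grass_measure)
qed (use assms(1,5-7) in \<open>auto intro: measurable_mdet_proj\<close>)

lemma pseudorect_pair_unique:
  assumes "k \<ge> 1" "pseudorect_pair k R mu1 S1" "pseudorect_pair k R mu2 S2"
  shows "mu1 = mu2 \<and> {x \<in> R. S1 x \<noteq> S2 x} \<in> null_sets mu1"
proof -
  have "(\<integral>\<^sup>+x\<in>A. ennreal (mdet (proj V) (S1 x)) \<partial>mu1) = (\<integral>\<^sup>+x\<in>A. ennreal (mdet (proj V) (S2 x)) \<partial>mu2)"
    if "V \<in> grass k" "A \<in> sets mu1" for V A
    using assms(2,3) that unfolding pseudorect_pair_def by (metis (no_types, lifting))
  then show ?thesis
    using measure_eq_if_mdet_proj_integrals_eq[OF assms(1), of mu1 mu2 S1 S2] assms(2,3)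
    unfolding pseudorect_pair_def by auto
qed

theorem mainTheorem11:
  fixes k :: nat
    and M1 M2 :: "'b measure"
    and T1 T2 :: "'b \<Rightarrow> ('a::{real_inner,complete_space,second_countable_topology}) set"
  assumes "k \<ge> 1"
  shows "(sets M1 = sets M2 \<and> sigma_finite_measure M1 \<and> sigma_finite_measure M2 \<and>
          T1 \<in> M1 \<rightarrow>\<^sub>M grass_measure k \<and> T2 \<in> M2 \<rightarrow>\<^sub>M grass_measure k \<and>
          (\<forall>V\<in>(grass k :: 'a set set). \<forall>A\<in>sets M1.
             (\<integral>\<^sup>+x\<in>A. ennreal (mdet (proj V) (T1 x)) \<partial>M1)
             = (\<integral>\<^sup>+x\<in>A. ennreal (mdet (proj V) (T2 x)) \<partial>M2))
          \<longrightarrow> M1 = M2 \<and> {x \<in> space M1. T1 x \<noteq> T2 x} \<in> null_sets M1)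
       \<and> (\<forall>(R::'a set) mu1 mu2 S1 S2.
            pseudorectifiable k R \<and> pseudorect_pair k R mu1 S1 \<and> pseudorect_pair k R mu2 S2
            \<longrightarrow> mu1 = mu2 \<and> {x \<in> R. S1 x \<noteq> S2 x} \<in> null_sets mu1)"
  using measure_eq_if_mdet_proj_integrals_eq[OF assms, of M1 M2 T1 T2] pseudorect_pair_unique[OF assms]
  by blast

end
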